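(* Let $\alpha\in\ell^2$, let $I$ be a finite interval in $\mathbb{N}$ with endpoints $a\le b$, and let $\epsilon>0$. Suppose that the set $S(\epsilon)=\{k\in\mathbb{N}: Z_k\subseteq I,\ \sigma_k>\epsilon\}$ has at least $4$ distinct elements. Then $J(I)>\epsilon/2$ and $L(I)>\epsilon/(2\sqrt2)$.
   Context: $\mathbb{N}=\{0,1,2,\dots\}$; $Z_k=[2^k,2^{k+1}-1]\cap\mathbb{N}$; $\sigma_k=(\sum_{j=2^k}^{2^{k+1}-1}(j+1)|\alpha_j|^2)^{1/2}$. $J(I)=\inf_{c\in I}\max(A_c,B_c)$ with $A_c=\sup_{a\le s\le c}(c-s)^{1/2}(\sum_{k=a}^s|\alpha_k|^2)^{1/2}$, $B_c=\sup_{c\le s\le b}(s-c)^{1/2}(\sum_{k=s}^b|\alpha_k|^2)^{1/2}$. $L(I)=(\sup_{\|f\|_{2,I}\le1}l(I,f)/\mu(I))^{1/2}$ where $\mu(I)=\sum_{k\in I}|\alpha_k|^2$, $\|f\|_{2,I}=(\sum_{k\in I}|f(k)|^2)^{1/2}$, $l(I,f)=\sum_{k\in I}\sum_{n\in I\setminus\{k\}}|\alpha_k\alpha_n\sum_{j=\min(k,n)+1}^{\max(k,n)}f(j)|^2$ (sup over $f$ supported in $I$; $L(I)=0$ if $\alpha$ vanishes on $I$). *)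

theory Defs
  imports "HOL-Analysis.Analysis"
begin

definition Zblock :: "nat \<Rightarrow> nat set" where
  "Zblock k = {2^k .. 2^(k+1) - 1}"

definition sigma :: "(nat \<Rightarrow> complex) \<Rightarrow> nat \<Rightarrow> real" where
  "sigma \<alpha> k = sqrt (\<Sum>j = 2^k .. 2^(k+1) - 1. real (j + 1) * (cmod (\<alpha> j))^2)"

definition Aval :: "(nat \<Rightarrow> complex) \<Rightarrow> nat \<Rightarrow> nat \<Rightarrow> real" where
  "Aval \<alpha> a c = Max ((\<lambda>s. sqrt (real c - real s) * sqrt (\<Sum>k = a..s. (cmod (\<alpha> k))^2)) ` {a..c})"

definition Bval :: "(nat \<Rightarrow> complex) \<Rightarrow> nat \<Rightarrow> nat \<Rightarrow> real" where
  "Bval \<alpha> b c = Max ((\<lambda>s. sqrt (real s - real c) * sqrt (\<Sum>k = s..b. (cmod (\<alpha> k))^2)) ` {c..b})"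

definition Jval :: "(nat \<Rightarrow> complex) \<Rightarrow> nat \<Rightarrow> nat \<Rightarrow> real" where
  "Jval \<alpha> a b = Min ((\<lambda>c. max (Aval \<alpha> a c) (Bval \<alpha> b c)) ` {a..b})"

definition muI :: "(nat \<Rightarrow> complex) \<Rightarrow> nat set \<Rightarrow> real" where
  "muI \<alpha> I = (\<Sum>k\<in>I. (cmod (\<alpha> k))^2)"

definition norm2I :: "nat set \<Rightarrow> (nat \<Rightarrow> complex) \<Rightarrow> real" where
  "norm2I I f = sqrt (\<Sum>k\<in>I. (cmod (f k))^2)"

definition lval :: "(nat \<Rightarrow> complex) \<Rightarrow> nat set \<Rightarrow> (nat \<Rightarrow> complex) \<Rightarrow> real" where
  "lval \<alpha> I f = (\<Sum>k\<in>I. \<Sum>n\<in>I - {k}.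
      (cmod (\<alpha> k * \<alpha> n * (\<Sum>j = min k n + 1 .. max k n. f j)))^2)"

definition Lval :: "(nat \<Rightarrow> complex) \<Rightarrow> nat set \<Rightarrow> real" where
  "Lval \<alpha> I = (if muI \<alpha> I = 0 then 0 else
      sqrt (Sup {lval \<alpha> I f / muI \<alpha> I | f. (\<forall>k. k \<notin> I \<longrightarrow> f k = 0) \<and> norm2I I f \<le> 1}))"

end

theory Submission
  imports Defs
begin

(* A block Z_k with sigma_k > eps carries mass mu(Z_k) > eps^2 / 2^(k+1), because j + 1 <= 2^(k+1)
   on Z_k.  Among four such blocks inside I there are two, Z_i and Z_j, with j >= i + 3, and the
   point p = 2^(i+2) separates them with room to spare on both sides.

   For J: a split point c >= p lies at distance >= 2^(i+1) to the right of Z_i, so A_c > eps/2;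
   a split point c < p lies at distance >= 2^(j-1) to the left of Z_j, so B_c > eps/2.

   For L: one of [a, p) and [p, b] carries half of mu(I).  Let f be the normalised indicator of
   the gap T between that half and the block on the other side of p.  Every pair (k, n) across
   the gap sees the full sum sqrt |T| of f, hence l(I, f) >= |T| mu(half) mu(block), which
   exceeds eps^2 mu(I) / 8. *)

lemma exists_spread_of_card:
  fixes S :: "nat set"
  assumes "n < card S"
  shows "\<exists>i\<in>S. \<exists>j\<in>S. i + n \<le> j"
proof -
  have fin: "finite S" and ne: "S \<noteq> {}"
    using assms card.infinite by fastforce+
  have "card S \<le> card {Min S..Max S}"
    using fin by (intro card_mono) auto
  then have "Min S + n \<le> Max S" using assms by simp
  then show ?thesis using Min_in[OF fin ne] Max_in[OF fin ne] by blast
qed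

lemma Zblock_eq: "Zblock k = {2^k..<2^(k+1)}"
proof -
  have "(2::nat)^(k+1) = Suc (2^(k+1) - 1)" by simp
  then show ?thesis unfolding Zblock_def by (metis atLeastLessThanSuc_atLeastAtMost)
qed

lemma Zblock_subset_iff: "Zblock k \<subseteq> {a..b} \<longleftrightarrow> a \<le> 2^k \<and> 2^(k+1) \<le> Suc b"
proof
  assume sub: "Zblock k \<subseteq> {a..b}"
  have "(2::nat)^k < 2^(k+1)" by simp
  then have "2^k \<in> Zblock k" "2^(k+1) - 1 \<in> Zblock k" unfolding Zblock_eq by auto
  with sub have "a \<le> 2^k" "2^(k+1) - 1 \<le> b" by auto
  then show "a \<le> 2^k \<and> 2^(k+1) \<le> Suc b" by simp
qed (auto simp: Zblock_eq)

lemma muI_nonneg: "0 \<le> muI \<alpha> A"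
  unfolding muI_def by (intro sum_nonneg) simp

lemma muI_mono: "A \<subseteq> B \<Longrightarrow> finite B \<Longrightarrow> muI \<alpha> A \<le> muI \<alpha> B"
  unfolding muI_def by (intro sum_mono2) auto

lemma sigma_sq_le_block_mass: "(sigma \<alpha> k)^2 \<le> 2^(k+1) * muI \<alpha> (Zblock k)"
proof -
  have "(sigma \<alpha> k)^2 = (\<Sum>j\<in>Zblock k. real (j + 1) * (cmod (\<alpha> j))^2)"
    unfolding sigma_def Zblock_def by (simp add: sum_nonneg)
  also have "\<dots> \<le> (\<Sum>j\<in>Zblock k. 2^(k+1) * (cmod (\<alpha> j))^2)"
  proof (intro sum_mono mult_right_mono)
    fix j assume "j \<in> Zblock k"
    then have "j + 1 \<le> (2::nat)^(k+1)" unfolding Zblock_eq by simp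
    then show "real (j + 1) \<le> 2^(k+1)" using of_nat_mono[of "j + 1" "2^(k+1)"] by simp
  qed simp
  also have "\<dots> = 2^(k+1) * muI \<alpha> (Zblock k)"
    unfolding muI_def by (simp add: sum_distrib_left)
  finally show ?thesis .
qed

lemma muI_block_pos:
  assumes "\<epsilon>^2 < 2^(k+1) * muI \<alpha> (Zblock k)"
  shows "0 < muI \<alpha> (Zblock k)"
  using le_less_trans[OF zero_le_power2 assms] by (simp add: zero_less_mult_iff)

lemma block_mass_gt:
  assumes "0 \<le> \<epsilon>" "\<epsilon> < sigma \<alpha> k"
  shows "\<epsilon>^2 < 2^(k+1) * muI \<alpha> (Zblock k)"
  using power_strict_mono[OF assms(2) assms(1), of 2] sigma_sq_le_block_mass[of \<alpha> k] by simp

lemma Aval_lower: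
  assumes "a \<le> s" "s \<le> c" "A \<subseteq> {a..s}"
  shows "sqrt ((real c - real s) * muI \<alpha> A) \<le> Aval \<alpha> a c"
proof -
  have "muI \<alpha> A \<le> (\<Sum>k = a..s. (cmod (\<alpha> k))^2)"
    using assms(3) unfolding muI_def by (intro sum_mono2) auto
  then have "sqrt ((real c - real s) * muI \<alpha> A)
      \<le> sqrt (real c - real s) * sqrt (\<Sum>k = a..s. (cmod (\<alpha> k))^2)"
    using assms(2) by (simp add: real_sqrt_mult[symmetric] mult_left_mono)
  also have "\<dots> \<le> Aval \<alpha> a c"
    unfolding Aval_def using assms(1,2) by (intro Max_ge) auto
  finally show ?thesis .
qed

lemma Bval_lower:
  assumes "c \<le> s" "s \<le> b" "A \<subseteq> {s..b}"
  shows "sqrt ((real s - real c) * muI \<alpha> A) \<le> Bval \<alpha> b c"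
proof -
  have "muI \<alpha> A \<le> (\<Sum>k = s..b. (cmod (\<alpha> k))^2)"
    using assms(3) unfolding muI_def by (intro sum_mono2) auto
  then have "sqrt ((real s - real c) * muI \<alpha> A)
      \<le> sqrt (real s - real c) * sqrt (\<Sum>k = s..b. (cmod (\<alpha> k))^2)"
    using assms(1) by (simp add: real_sqrt_mult[symmetric] mult_left_mono)
  also have "\<dots> \<le> Bval \<alpha> b c"
    unfolding Bval_def using assms(1,2) by (intro Max_ge) auto
  finally show ?thesis .
qed

lemma less_Jval_iff:
  assumes "a \<le> b"
  shows "e < Jval \<alpha> a b \<longleftrightarrow> (\<forall>c\<in>{a..b}. e < Aval \<alpha> a c \<or> e < Bval \<alpha> b c)"
  unfolding Jval_def using assms by (simp add: less_max_iff_disj)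

lemma Aval_gt_of_heavy_block:
  assumes "a \<le> 2^i" "4 * 2^i \<le> c"
    and heavy: "\<epsilon>^2 < 2^(i+1) * muI \<alpha> (Zblock i)"
  shows "\<epsilon> / 2 < Aval \<alpha> a c"
proof -
  define s where "s = 2 * 2^i - (1::nat)"
  have "a \<le> s" "s \<le> c" "Zblock i \<subseteq> {a..s}"
    using assms(1,2) unfolding s_def Zblock_eq by auto
  have "real s = 2 * 2^i - 1" unfolding s_def by (simp add: of_nat_diff)
  moreover have "4 * 2^i \<le> real c" using of_nat_mono[OF assms(2)] by simp
  ultimately have "2^(i+1) \<le> real c - real s" by simp
  have "(\<epsilon>/2)^2 \<le> \<epsilon>^2" by (simp add: power_divide)
  also note heavy
  also have "2^(i+1) * muI \<alpha> (Zblock i) \<le> (real c - real s) * muI \<alpha> (Zblock i)"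
    using \<open>2^(i+1) \<le> real c - real s\<close> by (intro mult_right_mono muI_nonneg)
  finally have "\<epsilon>/2 < sqrt ((real c - real s) * muI \<alpha> (Zblock i))" by (rule real_less_rsqrt)
  also have "\<dots> \<le> Aval \<alpha> a c" by (rule Aval_lower) fact+
  finally show ?thesis .
qed

lemma Bval_gt_of_heavy_block:
  assumes "2^(j+1) \<le> Suc b" "2 * c \<le> 2^j"
    and heavy: "\<epsilon>^2 < 2^(j+1) * muI \<alpha> (Zblock j)"
  shows "\<epsilon> / 2 < Bval \<alpha> b c"
proof -
  define s where "s = (2::nat)^j"
  have "c \<le> s" "s \<le> b" "Zblock j \<subseteq> {s..b}"
    using assms(1,2) unfolding s_def Zblock_eq by auto
  have "2 * real c \<le> 2^j" using of_nat_mono[OF assms(2)] by simp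
  then have "2^(j+1) / 4 \<le> real s - real c" unfolding s_def by simp
  have "(\<epsilon>/2)^2 = \<epsilon>^2 / 4" by (simp add: power_divide)
  also have "\<dots> < (2^(j+1) / 4) * muI \<alpha> (Zblock j)" using heavy by simp
  also have "\<dots> \<le> (real s - real c) * muI \<alpha> (Zblock j)"
    using \<open>2^(j+1) / 4 \<le> real s - real c\<close> by (intro mult_right_mono muI_nonneg)
  finally have "\<epsilon>/2 < sqrt ((real s - real c) * muI \<alpha> (Zblock j))" by (rule real_less_rsqrt)
  also have "\<dots> \<le> Bval \<alpha> b c" by (rule Bval_lower) fact+
  finally show ?thesis .
qed

lemma Jval_gt_of_heavy_blocks:
  assumes "a \<le> b" "Zblock i \<subseteq> {a..b}" "Zblock j \<subseteq> {a..b}" "i + 3 \<le> j"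
    and "\<epsilon>^2 < 2^(i+1) * muI \<alpha> (Zblock i)"
    and "\<epsilon>^2 < 2^(j+1) * muI \<alpha> (Zblock j)"
  shows "\<epsilon> / 2 < Jval \<alpha> a b"
  unfolding less_Jval_iff[OF assms(1)]
proof
  fix c
  have "(2::nat)^(i+3) \<le> 2^j" using assms(4) by (intro power_increasing) auto
  then have gap: "8 * 2^i \<le> (2::nat)^j" by (simp add: power_add)
  from assms(2,3) have "a \<le> 2^i" "2^(j+1) \<le> Suc b" by (simp_all add: Zblock_subset_iff)
  show "\<epsilon>/2 < Aval \<alpha> a c \<or> \<epsilon>/2 < Bval \<alpha> b c"
  proof (cases "4 * 2^i \<le> c")
    case True
    then show ?thesis using Aval_gt_of_heavy_block \<open>a \<le> 2^i\<close> assms(5) by blast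
  next
    case False
    then have "2 * c \<le> 2^j" using gap by simp
    then show ?thesis using Bval_gt_of_heavy_block \<open>2^(j+1) \<le> Suc b\<close> assms(6) by blast
  qed
qed

definition unit_indicator :: "nat set \<Rightarrow> nat \<Rightarrow> complex" where
  "unit_indicator T j = (if j \<in> T then complex_of_real (1 / sqrt (real (card T))) else 0)"

lemma norm2I_unit_indicator:
  assumes "finite I" "T \<subseteq> I" "T \<noteq> {}"
  shows "norm2I I (unit_indicator T) = 1"
proof -
  have "finite T" using assms(1,2) by (rule finite_subset[rotated])
  have "(\<Sum>k\<in>I. (cmod (unit_indicator T k))^2) = (\<Sum>k\<in>T. 1 / real (card T))"
    using assms
    by (intro sum.mono_neutral_cong_right) (auto simp: unit_indicator_def norm_divide power_divide)
  also have "\<dots> = 1" using \<open>finite T\<close> assms(3) by simp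
  finally show ?thesis unfolding norm2I_def by simp
qed

lemma sum_unit_indicator:
  assumes "finite J" "T \<subseteq> J"
  shows "(\<Sum>j\<in>J. unit_indicator T j) = complex_of_real (sqrt (real (card T)))"
proof -
  have "(\<Sum>j\<in>J. unit_indicator T j) = (\<Sum>j\<in>T. complex_of_real (1 / sqrt (real (card T))))"
    using assms by (intro sum.mono_neutral_cong_right) (auto simp: unit_indicator_def)
  also have "\<dots> = complex_of_real (real (card T) / sqrt (real (card T)))" by simp
  also have "real (card T) / sqrt (real (card T)) = sqrt (real (card T))" by (rule real_div_sqrt) simp
  finally show ?thesis .
qed

lemma lval_unit_indicator_ge:
  assumes "finite I" "L \<subseteq> I" "R \<subseteq> I" "u \<le> v" "L \<subseteq> {..<u}" "R \<subseteq> {v..}"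
  shows "real (Suc v - u) * muI \<alpha> L * muI \<alpha> R \<le> lval \<alpha> I (unit_indicator {u..v})"
proof -
  define g where "g k n =
    (cmod (\<alpha> k * \<alpha> n * (\<Sum>j = min k n + 1 .. max k n. unit_indicator {u..v} j)))^2" for k n
  have g_nonneg: "0 \<le> g k n" for k n unfolding g_def by simp
  have g_across: "g k n = real (Suc v - u) * (cmod (\<alpha> k))^2 * (cmod (\<alpha> n))^2"
    if "k \<in> L" "n \<in> R" for k n
  proof -
    have "k < u" "v \<le> n" using that assms(5,6) by auto
    then have "(\<Sum>j = min k n + 1 .. max k n. unit_indicator {u..v} j)
        = complex_of_real (sqrt (real (Suc v - u)))"
      using assms(4) by (subst sum_unit_indicator) auto
    then show ?thesis unfolding g_def by (simp add: norm_mult power_mult_distrib)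
  qed
  have "real (Suc v - u) * muI \<alpha> L * muI \<alpha> R = (\<Sum>k\<in>L. \<Sum>n\<in>R. g k n)"
    unfolding muI_def by (simp add: g_across sum_distrib_left sum_distrib_right mult_ac)
  also have "\<dots> \<le> (\<Sum>k\<in>L. \<Sum>n\<in>I - {k}. g k n)"
  proof (intro sum_mono sum_mono2 g_nonneg)
    fix k assume "k \<in> L"
    with assms(4-6) have "k \<notin> R" by fastforce
    with assms(3) show "R \<subseteq> I - {k}" by blast
  qed (use assms(1) in auto)
  also have "\<dots> \<le> (\<Sum>k\<in>I. \<Sum>n\<in>I - {k}. g k n)"
    using assms by (intro sum_mono2 sum_nonneg g_nonneg) auto
  also have "\<dots> = lval \<alpha> I (unit_indicator {u..v})"
    unfolding lval_def g_def ..
  finally show ?thesis .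
qed

lemma norm_le_one_of_norm2I_le_one:
  assumes "finite I" "norm2I I f \<le> 1" "j \<in> I"
  shows "cmod (f j) \<le> 1"
proof -
  have "(cmod (f j))^2 \<le> (\<Sum>k\<in>I. (cmod (f k))^2)"
    using assms(1,3) by (intro member_le_sum) auto
  also have "\<dots> = (norm2I I f)^2" unfolding norm2I_def by (simp add: sum_nonneg)
  also have "\<dots> \<le> 1" using assms(2) by (intro power_le_one) (simp_all add: norm2I_def sum_nonneg)
  finally show ?thesis by (simp add: abs_square_le_1)
qed

lemma lval_le:
  assumes "finite I" "\<forall>k. k \<notin> I \<longrightarrow> f k = 0" "norm2I I f \<le> 1"
  shows "lval \<alpha> I f \<le> (real (card I))^2 * (\<Sum>k\<in>I. \<Sum>n\<in>I - {k}. (cmod (\<alpha> k * \<alpha> n))^2)"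
proof -
  have term_le: "(cmod (\<alpha> k * \<alpha> n * (\<Sum>j = min k n + 1 .. max k n. f j)))^2
      \<le> (real (card I))^2 * (cmod (\<alpha> k * \<alpha> n))^2" for k n
  proof -
    define J where "J = {min k n + 1 .. max k n} \<inter> I"
    have "(\<Sum>j = min k n + 1 .. max k n. f j) = (\<Sum>j\<in>J. f j)"
      unfolding J_def using assms(2) by (intro sum.mono_neutral_right) auto
    then have "cmod (\<Sum>j = min k n + 1 .. max k n. f j) \<le> (\<Sum>j\<in>J. cmod (f j))"
      by (simp add: norm_sum)
    also have "\<dots> \<le> real (card J) * 1"
      using norm_le_one_of_norm2I_le_one[OF assms(1,3)] unfolding J_def
      by (intro sum_bounded_above) auto
    also have "\<dots> \<le> real (card I)"
      unfolding J_def using assms(1) by (simp add: card_mono)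
    finally have "(cmod (\<Sum>j = min k n + 1 .. max k n. f j))^2 \<le> (real (card I))^2"
      by (simp add: power_mono)
    then have "(cmod (\<alpha> k * \<alpha> n))^2 * (cmod (\<Sum>j = min k n + 1 .. max k n. f j))^2
        \<le> (cmod (\<alpha> k * \<alpha> n))^2 * (real (card I))^2"
      by (rule mult_left_mono[OF _ zero_le_power2])
    then show ?thesis by (metis mult.commute norm_mult power_mult_distrib)
  qed
  show ?thesis
    unfolding lval_def sum_distrib_left[of "(real (card I))^2"] by (intro sum_mono term_le)
qed

lemma less_Lval:
  assumes "finite I" "\<forall>k. k \<notin> I \<longrightarrow> f k = 0" "norm2I I f \<le> 1"
    and "0 < muI \<alpha> I" "e^2 * muI \<alpha> I < lval \<alpha> I f"
  shows "e < Lval \<alpha> I"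
proof -
  define X where "X = {lval \<alpha> I f / muI \<alpha> I | f. (\<forall>k. k \<notin> I \<longrightarrow> f k = 0) \<and> norm2I I f \<le> 1}"
  define B where "B = (real (card I))^2 * (\<Sum>k\<in>I. \<Sum>n\<in>I - {k}. (cmod (\<alpha> k * \<alpha> n))^2)"
  have "bdd_above X"
    unfolding X_def using lval_le[OF assms(1), of _ \<alpha>, folded B_def] assms(4)
    by (intro bdd_aboveI[of _ "B / muI \<alpha> I"]) (auto intro: divide_right_mono)
  moreover have "lval \<alpha> I f / muI \<alpha> I \<in> X" unfolding X_def using assms(2,3) by blast
  ultimately have "lval \<alpha> I f / muI \<alpha> I \<le> Sup X" by (rule cSup_upper[rotated])
  moreover have "e^2 < lval \<alpha> I f / muI \<alpha> I" using assms(4,5) by (simp add: field_simps)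
  ultimately have "e < sqrt (Sup X)" by (intro real_less_rsqrt) simp
  then show ?thesis unfolding Lval_def X_def using assms(4) by simp
qed

lemma less_Lval_of_separated:
  assumes "finite I" "L \<subseteq> I" "R \<subseteq> I" "{u..v} \<subseteq> I" "u \<le> v" "L \<subseteq> {..<u}" "R \<subseteq> {v..}"
    and gt: "e^2 * muI \<alpha> I < real (Suc v - u) * muI \<alpha> L * muI \<alpha> R"
  shows "e < Lval \<alpha> I"
proof (rule less_Lval)
  show "\<forall>k. k \<notin> I \<longrightarrow> unit_indicator {u..v} k = 0"
    using assms(4) by (auto simp: unit_indicator_def)
  show "norm2I I (unit_indicator {u..v}) \<le> 1"
    using assms(1,4,5) by (simp add: norm2I_unit_indicator)
  show "0 < muI \<alpha> I"
  proof (rule ccontr)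
    assume "\<not> 0 < muI \<alpha> I"
    moreover have "0 \<le> muI \<alpha> L" "muI \<alpha> L \<le> muI \<alpha> I"
      using muI_nonneg muI_mono[OF assms(2,1)] by blast+
    ultimately have "muI \<alpha> L = 0" "muI \<alpha> I = 0" using muI_nonneg[of \<alpha> I] by linarith+
    with gt show False by simp
  qed
  show "e^2 * muI \<alpha> I < lval \<alpha> I (unit_indicator {u..v})"
    using gt lval_unit_indicator_ge[OF assms(1-3,5-7)] by (rule less_le_trans)
qed (fact assms(1))

lemma Lval_gt_of_block_before_heavy_tail:
  assumes "Zblock i \<subseteq> {a..b}" "4 * 2^i \<le> p" "p \<le> b"
    and heavy: "\<epsilon>^2 < 2^(i+1) * muI \<alpha> (Zblock i)"
    and tail: "muI \<alpha> {a..b} / 2 \<le> muI \<alpha> {p..b}"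
  shows "\<epsilon> / (2 * sqrt 2) < Lval \<alpha> {a..b}"
proof -
  define M where "M = muI \<alpha> {a..b}"
  have "0 < M"
    using muI_block_pos[OF heavy] muI_mono[OF assms(1) finite_atLeastAtMost, of \<alpha>]
    unfolding M_def by linarith
  have "4 * 2^i \<le> real p" using of_nat_mono[OF assms(2)] by simp
  moreover have "real (Suc p - 2 * 2^i) = real p + 1 - 2 * 2^i" using assms(2) by (simp add: of_nat_diff)
  ultimately have "2^(i+1) \<le> real (Suc p - 2 * 2^i)" by simp
  have "(\<epsilon> / (2 * sqrt 2))^2 * M \<le> \<epsilon>^2 * (M / 2)"
    using \<open>0 < M\<close> by (simp add: power_divide power_mult_distrib)
  also have "\<dots> < 2^(i+1) * muI \<alpha> (Zblock i) * (M / 2)"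
    using heavy \<open>0 < M\<close> by simp
  also have "\<dots> \<le> real (Suc p - 2 * 2^i) * muI \<alpha> (Zblock i) * muI \<alpha> {p..b}"
    using tail \<open>2^(i+1) \<le> real (Suc p - 2 * 2^i)\<close> \<open>0 < M\<close> unfolding M_def
    by (intro mult_mono) (simp_all add: muI_nonneg)
  finally have gt: "(\<epsilon> / (2 * sqrt 2))^2 * muI \<alpha> {a..b}
      < real (Suc p - 2 * 2^i) * muI \<alpha> (Zblock i) * muI \<alpha> {p..b}"
    unfolding M_def .
  from assms(1) have "a \<le> 2^i" by (simp add: Zblock_subset_iff)
  show ?thesis
  proof (rule less_Lval_of_separated[OF _ assms(1) _ _ _ _ _ gt])
    show "{p..b} \<subseteq> {a..b}" "{2 * 2^i..p} \<subseteq> {a..b}" "2 * 2^i \<le> p"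
      using \<open>a \<le> 2^i\<close> assms(2,3) by auto
    show "Zblock i \<subseteq> {..<2 * 2^i}" by (auto simp: Zblock_eq)
  qed auto
qed

lemma Lval_gt_of_heavy_head_before_block:
  assumes "Zblock j \<subseteq> {a..b}" "a \<le> p" "2 * p \<le> 2^j"
    and heavy: "\<epsilon>^2 < 2^(j+1) * muI \<alpha> (Zblock j)"
    and head: "muI \<alpha> {a..b} / 2 \<le> muI \<alpha> {a..<p}"
  shows "\<epsilon> / (2 * sqrt 2) < Lval \<alpha> {a..b}"
proof -
  define M where "M = muI \<alpha> {a..b}"
  have "0 < M"
    using muI_block_pos[OF heavy] muI_mono[OF assms(1) finite_atLeastAtMost, of \<alpha>]
    unfolding M_def by linarith
  have "2 * real p \<le> 2^j" using of_nat_mono[OF assms(3)] by simp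
  moreover have "real (Suc (2^j) - p) = 2^j + 1 - real p" using assms(3) by (simp add: of_nat_diff)
  ultimately have "2^(j+1) / 4 \<le> real (Suc (2^j) - p)" by simp
  have "(\<epsilon> / (2 * sqrt 2))^2 * M = \<epsilon>^2 / 4 * (M / 2)"
    by (simp add: power_divide power_mult_distrib)
  also have "\<dots> < (2^(j+1) / 4) * (M / 2) * muI \<alpha> (Zblock j)"
    using heavy \<open>0 < M\<close> by simp
  also have "\<dots> \<le> real (Suc (2^j) - p) * muI \<alpha> {a..<p} * muI \<alpha> (Zblock j)"
    using head \<open>2^(j+1) / 4 \<le> real (Suc (2^j) - p)\<close> \<open>0 < M\<close> unfolding M_def
    by (intro mult_mono) (simp_all add: muI_nonneg)
  finally have gt: "(\<epsilon> / (2 * sqrt 2))^2 * muI \<alpha> {a..b}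
      < real (Suc (2^j) - p) * muI \<alpha> {a..<p} * muI \<alpha> (Zblock j)"
    unfolding M_def .
  from assms(1) have "2^(j+1) \<le> Suc b" by (simp add: Zblock_subset_iff)
  show ?thesis
  proof (rule less_Lval_of_separated[OF _ _ assms(1) _ _ _ _ gt])
    show "{a..<p} \<subseteq> {a..b}" "{p..2^j} \<subseteq> {a..b}" "p \<le> 2^j"
      using assms(2,3) \<open>2^(j+1) \<le> Suc b\<close> by auto
    show "Zblock j \<subseteq> {2^j..}" by (auto simp: Zblock_eq)
  qed auto
qed

lemma Lval_gt_of_heavy_blocks:
  assumes "Zblock i \<subseteq> {a..b}" "Zblock j \<subseteq> {a..b}" "i + 3 \<le> j"
    and "\<epsilon>^2 < 2^(i+1) * muI \<alpha> (Zblock i)"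
    and "\<epsilon>^2 < 2^(j+1) * muI \<alpha> (Zblock j)"
  shows "\<epsilon> / (2 * sqrt 2) < Lval \<alpha> {a..b}"
proof -
  define p where "p = 4 * (2::nat)^i"
  have "(2::nat)^(i+3) \<le> 2^j" using assms(3) by (intro power_increasing) auto
  then have gap: "2 * p \<le> 2^j" unfolding p_def by (simp add: power_add)
  from assms(1,2) have "a \<le> 2^i" "2^(j+1) \<le> Suc b" by (simp_all add: Zblock_subset_iff)
  then have "a \<le> p" "p \<le> b" using gap unfolding p_def by simp_all
  then have "muI \<alpha> {a..b} = muI \<alpha> {a..<p} + muI \<alpha> {p..b}"
    unfolding muI_def by (subst sum.union_disjoint[symmetric]) (auto simp: ivl_disj_un)
  then consider "muI \<alpha> {a..b} / 2 \<le> muI \<alpha> {p..b}" | "muI \<alpha> {a..b} / 2 \<le> muI \<alpha> {a..<p}"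
    by linarith
  then show ?thesis
  proof cases
    case 1
    then show ?thesis using assms(1,4) \<open>p \<le> b\<close> unfolding p_def
      by (intro Lval_gt_of_block_before_heavy_tail) simp_all
  next
    case 2
    then show ?thesis using assms(2,5) \<open>a \<le> p\<close> gap
      by (intro Lval_gt_of_heavy_head_before_block) simp_all
  qed
qed

theorem lemma5p2:
  fixes \<alpha> :: "nat \<Rightarrow> complex" and a b :: nat and \<epsilon> :: real
  assumes l2: "summable (\<lambda>k. (cmod (\<alpha> k))^2)"
    and ab: "a \<le> b"
    and eps: "\<epsilon> > 0"
    and S4: "card {k. Zblock k \<subseteq> {a..b} \<and> sigma \<alpha> k > \<epsilon>} \<ge> 4"
  shows "Jval \<alpha> a b > \<epsilon> / 2 \<and> Lval \<alpha> {a..b} > \<epsilon> / (2 * sqrt 2)"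
proof -
  obtain i j where i: "Zblock i \<subseteq> {a..b}" "\<epsilon> < sigma \<alpha> i"
    and j: "Zblock j \<subseteq> {a..b}" "\<epsilon> < sigma \<alpha> j" and "i + 3 \<le> j"
    using exists_spread_of_card[of 3 "{k. Zblock k \<subseteq> {a..b} \<and> sigma \<alpha> k > \<epsilon>}"] S4 by auto
  have "\<epsilon>^2 < 2^(i+1) * muI \<alpha> (Zblock i)" "\<epsilon>^2 < 2^(j+1) * muI \<alpha> (Zblock j)"
    using block_mass_gt[OF less_imp_le[OF eps]] i(2) j(2) by blast+
  then show ?thesis
    using Jval_gt_of_heavy_blocks[OF ab i(1) j(1) \<open>i + 3 \<le> j\<close>]
      Lval_gt_of_heavy_blocks[OF i(1) j(1) \<open>i + 3 \<le> j\<close>] by blast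
qed

end
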